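(* Let $\nu\ge2$ and $2\le n,m\le\nu$ be integers. Let $A(\nu;n,m)$ be the matrix with $m-1$ rows and $n+m-2$ columns whose $i$-th row ($1\le i\le m-1$) has the entries $\nu-n+1,\nu-n+2,\ldots,\nu$ in columns $i,i+1,\ldots,i+n-1$ respectively, and $0$ in all other columns; define $A(\nu;m,n)$ analogously with the roles of $n$ and $m$ exchanged (so it has $n-1$ rows and $n+m-2$ columns). Let $X(\nu;n,m)$ be the $(n+m-2)\times(n+m-2)$ matrix obtained by placing $A(\nu;n,m)$ on top of $A(\nu;m,n)$. If one marks $n+m-2$ nonzero entries of $X(\nu;n,m)$ such that each row and each column contains exactly one marked entry, then the sum of the marked entries equals $$(\nu-n+1)(m-1)+\nu(n-1).$$ *)

theory Defs
  imports "HOL-Combinatorics.Permutations"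
begin

text \<open>Matrices are indexed from 0. A(nu;n,m): rows i < m-1, columns j < n+m-2;
  row i has entry nu-n+1+k in column i+k for k = 0..n-1, zero elsewhere.\<close>
definition Amat :: "nat \<Rightarrow> nat \<Rightarrow> nat \<Rightarrow> nat \<Rightarrow> nat \<Rightarrow> int" where
  "Amat nu n m i j =
     (if i < m - 1 \<and> j < n + m - 2 \<and> i \<le> j \<and> j < i + n
      then int nu - int n + 1 + int (j - i) else 0)"

definition Xmat :: "nat \<Rightarrow> nat \<Rightarrow> nat \<Rightarrow> nat \<Rightarrow> nat \<Rightarrow> int" where
  "Xmat nu n m i j =
     (if i < m - 1 then Amat nu n m i j else Amat nu m n (i - (m - 1)) j)"

end

theory Submission
  imports Defs
begin

text \<open>On its support, X(nu;n,m) is a sum r(i) + j of a row term and the column index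
  (the entries increase by one along each row and shift by one from row to row).
  For such a matrix every transversal has the same sum, because summing the column
  term over a permutation just sums it over all columns.\<close>

lemma sum_permutes_separable:
  fixes r s :: "'a \<Rightarrow> 'b::comm_monoid_add"
  assumes "\<sigma> permutes S" and "\<forall>i\<in>S. M i (\<sigma> i) = r i + s (\<sigma> i)"
  shows "(\<Sum>i\<in>S. M i (\<sigma> i)) = sum r S + sum s S"
proof -
  have "(\<Sum>i\<in>S. M i (\<sigma> i)) = sum r S + (\<Sum>i\<in>S. s (\<sigma> i))"
    using assms(2) by (simp add: sum.distrib)
  also have "(\<Sum>i\<in>S. s (\<sigma> i)) = sum s S"
    using sum.permute[OF assms(1), of s] by (simp add: comp_def)
  finally show ?thesis .
qed

lemma Amat_nonzero_eq:
  assumes "Amat nu n m i j \<noteq> 0"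
  shows "Amat nu n m i j = int nu - int n + 1 + int j - int i"
proof -
  have "i \<le> j" using assms by (simp add: Amat_def split: if_splits)
  then show ?thesis using assms by (simp add: Amat_def split: if_splits)
qed

lemma Xmat_nonzero_eq:
  assumes "1 \<le> m" and "Xmat nu n m i j \<noteq> 0"
  shows "Xmat nu n m i j = (if i < m - 1 then int nu - int n + 1 else int nu) + int j - int i"
proof (cases "i < m - 1")
  case True
  then show ?thesis using assms(2) Amat_nonzero_eq by (simp add: Xmat_def)
next
  case False
  then have "Xmat nu n m i j = Amat nu m n (i - (m - 1)) j" by (simp add: Xmat_def)
  then have "Xmat nu n m i j = int nu - int m + 1 + int j - int (i - (m - 1))"
    using Amat_nonzero_eq assms(2) by metis
  then show ?thesis using False assms(1) by simp
qed

lemma sum_lessThan_step_function: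
  "(\<Sum>i<a + b. if i < a then x else y) = of_nat a * x + of_nat b * (y :: 'a::semiring_1)"
proof (induction b)
  case 0
  then show ?case by simp
next
  case (Suc b)
  then show ?case by (simp add: algebra_simps)
qed

theorem lemma2p30:
  fixes nu n m :: nat and \<sigma> :: "nat \<Rightarrow> nat"
  assumes "nu \<ge> 2" and "2 \<le> n" and "n \<le> nu" and "2 \<le> m" and "m \<le> nu"
    and "\<sigma> permutes {..<n + m - 2}"
    and "\<forall>i < n + m - 2. Xmat nu n m i (\<sigma> i) \<noteq> 0"
  shows "(\<Sum>i<n + m - 2. Xmat nu n m i (\<sigma> i))
           = (int nu - int n + 1) * (int m - 1) + int nu * (int n - 1)"
proof -
  define w :: "nat \<Rightarrow> int" where "w i = (if i < m - 1 then int nu - int n + 1 else int nu)" for i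
  have size: "n + m - 2 = (m - 1) + (n - 1)" using assms(2,4) by simp
  have "\<forall>i \<in> {..<n + m - 2}. Xmat nu n m i (\<sigma> i) = (w i - int i) + int (\<sigma> i)"
  proof
    fix i assume "i \<in> {..<n + m - 2}"
    then have "Xmat nu n m i (\<sigma> i) = w i + int (\<sigma> i) - int i"
      using Xmat_nonzero_eq[of m nu n i "\<sigma> i"] assms(4,7) by (simp add: w_def)
    then show "Xmat nu n m i (\<sigma> i) = (w i - int i) + int (\<sigma> i)" by simp
  qed
  then have "(\<Sum>i<n + m - 2. Xmat nu n m i (\<sigma> i))
             = (\<Sum>i<n + m - 2. w i - int i) + (\<Sum>i<n + m - 2. int i)"
    by (rule sum_permutes_separable[OF assms(6)])
  also have "\<dots> = (\<Sum>i<(m - 1) + (n - 1). w i)"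
    by (simp add: sum_subtractf size)
  also have "\<dots> = int (m - 1) * (int nu - int n + 1) + int (n - 1) * int nu"
    unfolding w_def by (rule sum_lessThan_step_function)
  finally show ?thesis using assms(2,4) by (simp add: algebra_simps)
qed

end
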